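(* Let $X$ and $Y$ be bounded degree graphs with $X$ amenable, and let $f\colon X\to Y$ be a quasi-isometry. If $f$ is both quasi-$k$-to-one and quasi-$k'$-to-one for some $k,k'>0$, then $k=k'$.
   Context: Graphs carry their path metric. For $A\subset Y$, $\partial_Y A$ is the set of vertices of $Y\setminus A$ adjacent to some vertex of $A$. For $k>0$, a quasi-isometry $f\colon X\to Y$ is quasi-$k$-to-one if there is $C>0$ with $\bigl|k|A|-|f^{-1}(A)|\bigr|\le C|\partial_Y A|$ for every finite $A\subset Y$. A bounded degree graph is amenable if it admits a Følner sequence, i.e. finite sets $F_n$ with $|\partial F_n|/|F_n|\to0$. *)

theory Defs
  imports "HOL-Analysis.Analysis"
begin

definition is_graph :: "'a set \<Rightarrow> ('a \<Rightarrow> 'a \<Rightarrow> bool) \<Rightarrow> bool" where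
  "is_graph V E \<longleftrightarrow> (\<forall>x y. E x y \<longrightarrow> x \<in> V \<and> y \<in> V \<and> E y x \<and> x \<noteq> y)"

definition is_walk :: "('a \<Rightarrow> 'a \<Rightarrow> bool) \<Rightarrow> 'a list \<Rightarrow> bool" where
  "is_walk E xs \<longleftrightarrow> xs \<noteq> [] \<and> (\<forall>i. Suc i < length xs \<longrightarrow> E (xs ! i) (xs ! Suc i))"

definition graph_connected :: "'a set \<Rightarrow> ('a \<Rightarrow> 'a \<Rightarrow> bool) \<Rightarrow> bool" where
  "graph_connected V E \<longleftrightarrow>
     (\<forall>x\<in>V. \<forall>y\<in>V. \<exists>xs. is_walk E xs \<and> hd xs = x \<and> last xs = y)"

definition gdist :: "('a \<Rightarrow> 'a \<Rightarrow> bool) \<Rightarrow> 'a \<Rightarrow> 'a \<Rightarrow> nat" where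
  "gdist E x y = (LEAST n. \<exists>xs. is_walk E xs \<and> hd xs = x \<and> last xs = y \<and> length xs = Suc n)"

text \<open>Bounded degree graph (connected, so the path metric is a genuine metric).\<close>

definition bounded_degree_graph :: "'a set \<Rightarrow> ('a \<Rightarrow> 'a \<Rightarrow> bool) \<Rightarrow> bool" where
  "bounded_degree_graph V E \<longleftrightarrow> is_graph V E \<and> graph_connected V E \<and>
     (\<exists>D::nat. \<forall>x\<in>V. finite {y. E x y} \<and> card {y. E x y} \<le> D)"

definition vboundary :: "'a set \<Rightarrow> ('a \<Rightarrow> 'a \<Rightarrow> bool) \<Rightarrow> 'a set \<Rightarrow> 'a set" where
  "vboundary V E A = {y \<in> V - A. \<exists>x\<in>A. E x y}"

definition amenable_graph :: "'a set \<Rightarrow> ('a \<Rightarrow> 'a \<Rightarrow> bool) \<Rightarrow> bool" where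
  "amenable_graph V E \<longleftrightarrow> (\<exists>F :: nat \<Rightarrow> 'a set.
     (\<forall>n. finite (F n) \<and> F n \<noteq> {} \<and> F n \<subseteq> V) \<and>
     (\<lambda>n. real (card (vboundary V E (F n))) / real (card (F n))) \<longlonglongrightarrow> 0)"

definition quasi_isometry ::
  "'a set \<Rightarrow> ('a \<Rightarrow> 'a \<Rightarrow> bool) \<Rightarrow> 'b set \<Rightarrow> ('b \<Rightarrow> 'b \<Rightarrow> bool) \<Rightarrow> ('a \<Rightarrow> 'b) \<Rightarrow> bool" where
  "quasi_isometry VX EdX VY EdY f \<longleftrightarrow> f ` VX \<subseteq> VY \<and>
     (\<exists>K C::real. K \<ge> 1 \<and> C \<ge> 0 \<and>
        (\<forall>x\<in>VX. \<forall>x'\<in>VX.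
           real (gdist EdY (f x) (f x')) \<le> K * real (gdist EdX x x') + C \<and>
           real (gdist EdX x x') \<le> K * real (gdist EdY (f x) (f x')) + C) \<and>
        (\<forall>y\<in>VY. \<exists>x\<in>VX. real (gdist EdY y (f x)) \<le> C))"

definition quasi_k_to_one ::
  "'a set \<Rightarrow> ('a \<Rightarrow> 'a \<Rightarrow> bool) \<Rightarrow> 'b set \<Rightarrow> ('b \<Rightarrow> 'b \<Rightarrow> bool) \<Rightarrow> ('a \<Rightarrow> 'b) \<Rightarrow> real \<Rightarrow> bool" where
  "quasi_k_to_one VX EdX VY EdY f k \<longleftrightarrow> quasi_isometry VX EdX VY EdY f \<and>
     (\<exists>C::real. C > 0 \<and> (\<forall>A. finite A \<and> A \<subseteq> VY \<longrightarrow>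
        \<bar>k * real (card A) - real (card {x \<in> VX. f x \<in> A})\<bar>
          \<le> C * real (card (vboundary VY EdY A))))"

end

theory Submission
  imports Defs
begin

text \<open>Thicken a finite set \<open>F \<subseteq> X\<close> to the \<open>c\<close>-neighbourhood \<open>A\<close> of \<open>f(F)\<close>, where \<open>c\<close> is the
  coarse density constant of \<open>f\<close>. Then \<open>F \<subseteq> f\<^sup>-\<^sup>1(A)\<close>, and every boundary vertex of \<open>A\<close> lies
  near the image of a point at bounded distance from \<open>\<partial>F\<close>, so with bounded degrees
  \<open>|\<partial>A| \<le> M |\<partial>F|\<close> for a constant \<open>M\<close>. Subtracting the two quasi-\<open>k\<close>-to-one estimates for \<open>A\<close>
  gives \<open>|k - k'| |A| \<le> (C + C') |\<partial>A|\<close>; combined with \<open>|f\<^sup>-\<^sup>1(A)| \<le> |k| |A| + C |\<partial>A|\<close> this yields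
  \<open>|k - k'| |F| \<le> L |\<partial>F|\<close>. Along a Folner sequence the right-hand side is \<open>o(|F|)\<close>, so \<open>k = k'\<close>.\<close>

lemma is_walk_Nil [simp]: "\<not> is_walk E []"
  by (simp add: is_walk_def)

lemma is_walk_singleton [simp]: "is_walk E [x]"
  by (simp add: is_walk_def)

lemma is_walk_Cons_Cons [simp]: "is_walk E (x # y # zs) \<longleftrightarrow> E x y \<and> is_walk E (y # zs)"
  unfolding is_walk_def
proof safe
  fix i
  assume *: "\<forall>i. Suc i < length (x # y # zs) \<longrightarrow> E ((x # y # zs) ! i) ((x # y # zs) ! Suc i)"
  show "E x y" using *[rule_format, of 0] by simp
  assume "Suc i < length (y # zs)"
  then show "E ((y # zs) ! i) ((y # zs) ! Suc i)" using *[rule_format, of "Suc i"] by simp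
next
  fix i
  assume "E x y" "\<forall>i. Suc i < length (y # zs) \<longrightarrow> E ((y # zs) ! i) ((y # zs) ! Suc i)"
    and "Suc i < length (x # y # zs)"
  then show "E ((x # y # zs) ! i) ((x # y # zs) ! Suc i)"
    by (cases i) auto
qed

lemma is_walk_append:
  "is_walk E xs \<Longrightarrow> is_walk E ys \<Longrightarrow> last xs = hd ys \<Longrightarrow> is_walk E (xs @ tl ys)"
proof (induction xs rule: induct_list012)
  case (2 x)
  then show ?case by (cases ys) auto
next
  case (3 x y zs)
  then show ?case by (cases "zs @ tl ys") auto
qed simp

lemma last_append_tl:
  "xs \<noteq> [] \<Longrightarrow> ys \<noteq> [] \<Longrightarrow> last xs = hd ys \<Longrightarrow> last (xs @ tl ys) = last ys"
  by (cases ys) auto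

lemma is_walk_rev:
  assumes "\<And>a b. E a b \<Longrightarrow> E b a"
  shows "is_walk E xs \<Longrightarrow> is_walk E (rev xs)"
proof (induction xs rule: induct_list012)
  case (3 x y zs)
  then have "is_walk E (rev (y # zs) @ tl [y, x])"
    using assms by (intro is_walk_append) auto
  then show ?case by simp
qed simp_all

lemma gdist_geodesic:
  assumes "graph_connected V E" "x \<in> V" "y \<in> V"
  obtains xs where "is_walk E xs" "hd xs = x" "last xs = y" "length xs = Suc (gdist E x y)"
proof -
  obtain xs where "is_walk E xs" "hd xs = x" "last xs = y"
    using assms unfolding graph_connected_def by blast
  then have "\<exists>n xs. is_walk E xs \<and> hd xs = x \<and> last xs = y \<and> length xs = Suc n"
    by (intro exI[of _ "length xs - 1"] exI[of _ xs]) (cases xs, auto)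
  then have "\<exists>xs. is_walk E xs \<and> hd xs = x \<and> last xs = y \<and> length xs = Suc (gdist E x y)"
    unfolding gdist_def by (rule LeastI_ex)
  then show ?thesis using that by blast
qed

lemma gdist_less_length:
  assumes "is_walk E xs" "hd xs = x" "last xs = y"
  shows "gdist E x y < length xs"
proof -
  have "gdist E x y \<le> length xs - 1"
    unfolding gdist_def by (rule Least_le) (use assms in \<open>cases xs, auto\<close>)
  then show ?thesis
    using assms(1) by (cases xs) auto
qed

lemma gdist_self [simp]: "gdist E x x = 0"
  using gdist_less_length[of E "[x]"] by simp

lemma gdist_le_1_if_edge: "E x y \<Longrightarrow> gdist E x y \<le> 1"
  using gdist_less_length[of E "[x, y]" x y] by simp

lemma gdist_commute:
  assumes "is_graph V E" "graph_connected V E" "x \<in> V" "y \<in> V"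
  shows "gdist E x y = gdist E y x"
proof -
  have "gdist E b a \<le> gdist E a b" if ab: "a \<in> V" "b \<in> V" for a b
  proof -
    obtain xs where xs: "is_walk E xs" "hd xs = a" "last xs = b" "length xs = Suc (gdist E a b)"
      using gdist_geodesic[OF assms(2) ab] .
    have "is_walk E (rev xs)"
      using is_walk_rev[OF _ xs(1)] assms(1) unfolding is_graph_def by blast
    then have "gdist E b a < length (rev xs)"
      using xs by (intro gdist_less_length) (auto simp: hd_rev last_rev)
    then show ?thesis using xs(4) by simp
  qed
  then show ?thesis using assms(3,4) by (simp add: order_antisym)
qed

lemma gdist_triangle:
  assumes "graph_connected V E" "x \<in> V" "y \<in> V" "z \<in> V"
  shows "gdist E x z \<le> gdist E x y + gdist E y z"
proof -
  obtain xs where xs: "is_walk E xs" "hd xs = x" "last xs = y" "length xs = Suc (gdist E x y)"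
    using gdist_geodesic[OF assms(1-3)] .
  obtain ys where ys: "is_walk E ys" "hd ys = y" "last ys = z" "length ys = Suc (gdist E y z)"
    using gdist_geodesic[OF assms(1,3,4)] .
  have "xs \<noteq> []" "ys \<noteq> []" using xs(4) ys(4) by auto
  then have "gdist E x z < length (xs @ tl ys)"
    using xs ys by (intro gdist_less_length is_walk_append) (auto simp: last_append_tl)
  then show ?thesis using xs(4) ys(4) by simp
qed

lemma walk_leaves_through_vboundary:
  assumes "is_graph V E"
  shows "is_walk E xs \<Longrightarrow> hd xs \<in> F \<Longrightarrow> last xs \<notin> F \<Longrightarrow>
    \<exists>b\<in>vboundary V E F. \<exists>ys. is_walk E ys \<and> hd ys = b \<and> last ys = last xs \<and> length ys < length xs"
proof (induction xs rule: induct_list012)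
  case (3 x y zs)
  show ?case
  proof (cases "y \<in> F")
    case False
    then have "y \<in> vboundary V E F"
      using assms 3 unfolding vboundary_def is_graph_def by auto
    then show ?thesis using 3 by (intro bexI[of _ y] exI[of _ "y # zs"]) auto
  next
    case True
    then show ?thesis using 3 by fastforce
  qed
qed simp_all

lemma gdist_vboundary_less:
  assumes "is_graph V E" "graph_connected V E" "x \<in> F" "x \<in> V" "y \<in> V" "y \<notin> F"
  shows "\<exists>b\<in>vboundary V E F. gdist E b y < gdist E x y"
proof -
  obtain xs where xs: "is_walk E xs" "hd xs = x" "last xs = y" "length xs = Suc (gdist E x y)"
    using gdist_geodesic[OF assms(2,4,5)] .
  have "\<exists>b\<in>vboundary V E F. \<exists>ys. is_walk E ys \<and> hd ys = b \<and> last ys = y \<and> length ys < length xs"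
    using walk_leaves_through_vboundary[OF assms(1) xs(1)] xs(2,3) assms(3,6) by simp
  then obtain b ys where "b \<in> vboundary V E F" "is_walk E ys" "hd ys = b" "last ys = y"
      "length ys < length xs"
    by blast
  then show ?thesis
    using gdist_less_length[of E ys b y] xs(4) by (intro bexI[of _ b]) auto
qed

definition gball :: "'a set \<Rightarrow> ('a \<Rightarrow> 'a \<Rightarrow> bool) \<Rightarrow> 'a \<Rightarrow> nat \<Rightarrow> 'a set" where
  "gball V E v r = {w \<in> V. gdist E v w \<le> r}"

fun walk_reach :: "('a \<Rightarrow> 'a \<Rightarrow> bool) \<Rightarrow> 'a \<Rightarrow> nat \<Rightarrow> 'a set" where
  "walk_reach E v 0 = {v}"
| "walk_reach E v (Suc r) = walk_reach E v r \<union> (\<Union>z\<in>walk_reach E v r. {y. E z y})"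

lemma walk_reach_mono: "r \<le> s \<Longrightarrow> walk_reach E v r \<subseteq> walk_reach E v s"
  by (induction s rule: dec_induct) auto

lemma walk_nth_in_walk_reach: "is_walk E xs \<Longrightarrow> i < length xs \<Longrightarrow> xs ! i \<in> walk_reach E (hd xs) i"
proof (induction i)
  case 0
  then show ?case by (cases xs) auto
next
  case (Suc i)
  then have "E (xs ! i) (xs ! Suc i)" unfolding is_walk_def by blast
  then show ?case using Suc by auto
qed

lemma walk_reach_subset: "is_graph V E \<Longrightarrow> v \<in> V \<Longrightarrow> walk_reach E v r \<subseteq> V"
  by (induction r) (auto simp: is_graph_def)

lemma card_UN_le_mult:
  assumes "finite I" "\<And>i. i \<in> I \<Longrightarrow> card (S i) \<le> m"
  shows "card (\<Union>i\<in>I. S i) \<le> card I * m"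
proof -
  have "card (\<Union>i\<in>I. S i) \<le> (\<Sum>i\<in>I. card (S i))" by (rule card_UN_le[OF assms(1)])
  also have "\<dots> \<le> card I * m" using sum_bounded_above[of I "\<lambda>i. card (S i)" m] assms(2) by simp
  finally show ?thesis .
qed

lemma walk_reach_finite_card:
  assumes "is_graph V E" "v \<in> V" "\<forall>x\<in>V. finite {y. E x y} \<and> card {y. E x y} \<le> D"
  shows "finite (walk_reach E v r) \<and> card (walk_reach E v r) \<le> (D + 1) ^ r"
proof (induction r)
  case (Suc r)
  let ?N = "\<Union>z\<in>walk_reach E v r. {y. E z y}"
  have sub: "walk_reach E v r \<subseteq> V" by (rule walk_reach_subset[OF assms(1,2)])
  have "card (walk_reach E v (Suc r)) \<le> card (walk_reach E v r) + card ?N"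
    by (simp add: card_Un_le)
  also have "\<dots> \<le> card (walk_reach E v r) * (D + 1)"
    using card_UN_le_mult[of "walk_reach E v r" "\<lambda>z. {y. E z y}" D] Suc sub assms(3) by auto
  also have "\<dots> \<le> (D + 1) ^ r * (D + 1)"
    using Suc by (intro mult_le_mono1) simp
  also have "\<dots> = (D + 1) ^ Suc r"
    by (simp only: power_Suc mult.commute)
  finally show ?case using Suc sub assms(3) by auto
qed simp

lemma gball_subset_walk_reach:
  assumes "graph_connected V E" "v \<in> V"
  shows "gball V E v r \<subseteq> walk_reach E v r"
proof
  fix w assume "w \<in> gball V E v r"
  then have w: "w \<in> V" "gdist E v w \<le> r" unfolding gball_def by auto
  obtain xs where xs: "is_walk E xs" "hd xs = v" "last xs = w" "length xs = Suc (gdist E v w)"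
    using gdist_geodesic[OF assms w(1)] .
  have "xs \<noteq> []" using xs(4) by auto
  then have "w = xs ! gdist E v w"
    using xs(3,4) by (simp add: last_conv_nth)
  moreover have "xs ! gdist E v w \<in> walk_reach E v (gdist E v w)"
    using walk_nth_in_walk_reach[OF xs(1), of "gdist E v w"] xs(2,4) by simp
  ultimately have "w \<in> walk_reach E v (gdist E v w)" by simp
  then show "w \<in> walk_reach E v r"
    using walk_reach_mono[OF w(2), of E v] by blast
qed

lemma bounded_degree_gball_bound:
  assumes "bounded_degree_graph V E"
  obtains B where "\<And>v. v \<in> V \<Longrightarrow> finite (gball V E v r) \<and> card (gball V E v r) \<le> B"
proof -
  obtain D where "is_graph V E" "graph_connected V E"
    and "\<forall>x\<in>V. finite {y. E x y} \<and> card {y. E x y} \<le> D"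
    using assms unfolding bounded_degree_graph_def by blast
  then have "finite (gball V E v r) \<and> card (gball V E v r) \<le> (D + 1) ^ r" if "v \<in> V" for v
    using walk_reach_finite_card gball_subset_walk_reach that
    by (meson card_mono finite_subset order_trans)
  then show ?thesis using that by blast
qed

lemma quasi_isometry_finite_preimage:
  assumes "bounded_degree_graph VX EdX" "quasi_isometry VX EdX VY EdY f" "finite A"
  shows "finite {x \<in> VX. f x \<in> A}"
proof -
  obtain K C :: real where qi: "\<forall>x\<in>VX. \<forall>x'\<in>VX.
      real (gdist EdX x x') \<le> K * real (gdist EdY (f x) (f x')) + C"
    using assms(2) unfolding quasi_isometry_def by blast
  have fiber: "{x \<in> VX. f x = f x0} \<subseteq> gball VX EdX x0 (nat \<lceil>C\<rceil>)" if x0: "x0 \<in> VX" for x0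
  proof
    fix x assume x: "x \<in> {x \<in> VX. f x = f x0}"
    then have "real (gdist EdX x0 x) \<le> C"
      using qi[rule_format, of x0 x] x0 by simp
    then have "gdist EdX x0 x \<le> nat \<lceil>C\<rceil>" by linarith
    with x show "x \<in> gball VX EdX x0 (nat \<lceil>C\<rceil>)" by (simp add: gball_def)
  qed
  have "finite {x \<in> VX. f x = a}" for a
  proof (cases "\<exists>x0\<in>VX. f x0 = a")
    case True
    then obtain x0 where x0: "x0 \<in> VX" "f x0 = a" by blast
    have "finite (gball VX EdX x0 (nat \<lceil>C\<rceil>))"
      using bounded_degree_gball_bound[OF assms(1), of "nat \<lceil>C\<rceil>"] x0(1) by metis
    then show ?thesis using finite_subset[OF fiber[OF x0(1)]] x0(2) by simp
  next
    case False
    then have "{x \<in> VX. f x = a} = {}" by blast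
    then show ?thesis by (metis finite.emptyI)
  qed
  moreover have "{x \<in> VX. f x \<in> A} = (\<Union>a\<in>A. {x \<in> VX. f x = a})" by blast
  ultimately show ?thesis using assms(3) by simp
qed

lemma vboundary_thickening_subset:
  assumes "is_graph VX EdX" "graph_connected VX EdX" "is_graph VY EdY" "graph_connected VY EdY"
    and "f ` VX \<subseteq> VY" "F \<subseteq> VX"
    and dense: "\<And>y. y \<in> VY \<Longrightarrow> \<exists>x\<in>VX. gdist EdY y (f x) \<le> c"
    and expansion: "\<And>x x'. x \<in> VX \<Longrightarrow> x' \<in> VX \<Longrightarrow> gdist EdY (f x) (f x') \<le> 2 * c + 1 \<Longrightarrow>
      gdist EdX x x' \<le> R"
  shows "vboundary VY EdY (\<Union>x\<in>F. gball VY EdY (f x) c)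
    \<subseteq> (\<Union>b\<in>vboundary VX EdX F. \<Union>z\<in>gball VX EdX b R. gball VY EdY (f z) c)"
proof
  let ?A = "\<Union>x\<in>F. gball VY EdY (f x) c"
  fix y assume "y \<in> vboundary VY EdY ?A"
  then obtain x y' where y: "y \<in> VY" "y \<notin> ?A" "EdY y' y"
    and x: "x \<in> F" "y' \<in> VY" "gdist EdY (f x) y' \<le> c"
    unfolding vboundary_def gball_def by blast
  obtain x' where x': "x' \<in> VX" "gdist EdY y (f x') \<le> c"
    using dense y(1) by blast
  have fx: "f x \<in> VY" "f x' \<in> VY" using x x' assms(5,6) by auto
  have yx': "gdist EdY (f x') y \<le> c"
    using x'(2) gdist_commute[OF assms(3,4) y(1) fx(2)] by simp
  then have "x' \<notin> F" using y(1,2) unfolding gball_def by blast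
  have "gdist EdY (f x) (f x') \<le> gdist EdY (f x) y' + gdist EdY y' y + gdist EdY y (f x')"
    using gdist_triangle[OF assms(4) fx(1) x(2) fx(2)] gdist_triangle[OF assms(4) x(2) y(1) fx(2)]
    by simp
  also have "\<dots> \<le> 2 * c + 1"
    using x(3) gdist_le_1_if_edge[of EdY y' y] y(3) x'(2) by simp
  finally have "gdist EdX x x' \<le> R"
    using expansion x(1) x'(1) assms(6) by blast
  then obtain b where "b \<in> vboundary VX EdX F" "gdist EdX b x' \<le> R"
    using gdist_vboundary_less[OF assms(1,2) x(1) _ x'(1) \<open>x' \<notin> F\<close>] x(1) assms(6)
    by (meson less_imp_le order_trans subsetD)
  then show "y \<in> (\<Union>b\<in>vboundary VX EdX F. \<Union>z\<in>gball VX EdX b R. gball VY EdY (f z) c)"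
    using x'(1) y(1) yx' unfolding gball_def by blast
qed

lemma quasi_isometry_thickening:
  assumes X: "bounded_degree_graph VX EdX" and Y: "bounded_degree_graph VY EdY"
    and qi: "quasi_isometry VX EdX VY EdY f"
  obtains M :: nat where "\<And>F. finite F \<Longrightarrow> F \<subseteq> VX \<Longrightarrow>
    \<exists>A. finite A \<and> A \<subseteq> VY \<and> F \<subseteq> {x \<in> VX. f x \<in> A} \<and>
      card (vboundary VY EdY A) \<le> M * card (vboundary VX EdX F)"
proof -
  obtain DX where gX: "is_graph VX EdX" "graph_connected VX EdX"
    and DX: "\<forall>x\<in>VX. finite {y. EdX x y} \<and> card {y. EdX x y} \<le> DX"
    using X unfolding bounded_degree_graph_def by blast
  have gY: "is_graph VY EdY" "graph_connected VY EdY"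
    using Y unfolding bounded_degree_graph_def by blast+
  obtain K C :: real where fV: "f ` VX \<subseteq> VY" and K: "K \<ge> 1"
    and lower: "\<forall>x\<in>VX. \<forall>x'\<in>VX. real (gdist EdX x x') \<le> K * real (gdist EdY (f x) (f x')) + C"
    and dense: "\<forall>y\<in>VY. \<exists>x\<in>VX. real (gdist EdY y (f x)) \<le> C"
    using qi unfolding quasi_isometry_def by blast
  define c where "c = nat \<lceil>C\<rceil>"
  define R where "R = nat \<lceil>K * (2 * real c + 1) + C\<rceil>"
  have dense_c: "\<exists>x\<in>VX. gdist EdY y (f x) \<le> c" if y: "y \<in> VY" for y
  proof -
    obtain x where "x \<in> VX" "real (gdist EdY y (f x)) \<le> C" using dense y by blast
    then show ?thesis unfolding c_def by (intro bexI[of _ x]) linarith+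
  qed
  have expansion: "gdist EdX x x' \<le> R"
    if "x \<in> VX" "x' \<in> VX" "gdist EdY (f x) (f x') \<le> 2 * c + 1" for x x'
  proof -
    have "real (gdist EdX x x') \<le> K * real (gdist EdY (f x) (f x')) + C"
      using lower that(1,2) by blast
    also have "\<dots> \<le> K * (2 * real c + 1) + C"
      using of_nat_mono[OF that(3), where 'a=real] K by (intro add_right_mono mult_left_mono) simp_all
    finally show ?thesis unfolding R_def by linarith
  qed
  obtain BX where BX: "\<And>v. v \<in> VX \<Longrightarrow> finite (gball VX EdX v R) \<and> card (gball VX EdX v R) \<le> BX"
    using bounded_degree_gball_bound[OF X, of R] by blast
  obtain BY where BY: "\<And>v. v \<in> VY \<Longrightarrow> finite (gball VY EdY v c) \<and> card (gball VY EdY v c) \<le> BY"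
    using bounded_degree_gball_bound[OF Y, of c] by blast
  have "\<exists>A. finite A \<and> A \<subseteq> VY \<and> F \<subseteq> {x \<in> VX. f x \<in> A} \<and>
      card (vboundary VY EdY A) \<le> BX * BY * card (vboundary VX EdX F)"
    if F: "finite F" "F \<subseteq> VX" for F
  proof (intro exI conjI)
    let ?A = "\<Union>x\<in>F. gball VY EdY (f x) c"
    let ?U = "\<Union>b\<in>vboundary VX EdX F. \<Union>z\<in>gball VX EdX b R. gball VY EdY (f z) c"
    show "finite ?A" using F fV BY by blast
    show "?A \<subseteq> VY" by (auto simp: gball_def)
    have "f x \<in> gball VY EdY (f x) c" if "x \<in> F" for x
      using that F fV by (auto simp: gball_def)
    then show "F \<subseteq> {x \<in> VX. f x \<in> ?A}" using F by blast
    have "vboundary VX EdX F \<subseteq> (\<Union>x\<in>F. {y. EdX x y})" by (auto simp: vboundary_def)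
    moreover have "finite (\<Union>x\<in>F. {y. EdX x y})" using F DX by blast
    ultimately have dF: "vboundary VX EdX F \<subseteq> VX" "finite (vboundary VX EdX F)"
      by (auto simp: vboundary_def intro: finite_subset)
    have ball_card: "card (\<Union>z\<in>gball VX EdX b R. gball VY EdY (f z) c) \<le> BX * BY"
      if "b \<in> VX" for b
    proof -
      have "card (\<Union>z\<in>gball VX EdX b R. gball VY EdY (f z) c) \<le> card (gball VX EdX b R) * BY"
        using BX[OF that] BY fV by (intro card_UN_le_mult) (auto simp: gball_def)
      also have "\<dots> \<le> BX * BY" using BX[OF that] by simp
      finally show ?thesis .
    qed
    have "finite ?U" using dF BX BY fV by (intro finite_UN_I) (auto simp: gball_def)
    then have "card (vboundary VY EdY ?A) \<le> card ?U"
      using vboundary_thickening_subset[OF gX gY fV F(2) dense_c expansion] by (rule card_mono)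
    also have "\<dots> \<le> card (vboundary VX EdX F) * (BX * BY)"
      using dF ball_card by (intro card_UN_le_mult) auto
    finally show "card (vboundary VY EdY ?A) \<le> BX * BY * card (vboundary VX EdX F)"
      by (simp add: mult.commute)
  qed
  then show ?thesis using that by blast
qed

lemma quasi_k_to_one_difference_bound:
  assumes "quasi_k_to_one VX EdX VY EdY f k" "quasi_k_to_one VX EdX VY EdY f k'"
  obtains L :: real where "L \<ge> 0" "\<And>A. finite A \<Longrightarrow> A \<subseteq> VY \<Longrightarrow>
    \<bar>k - k'\<bar> * real (card {x \<in> VX. f x \<in> A}) \<le> L * real (card (vboundary VY EdY A))"
proof -
  obtain C1 where "C1 > 0" and q1: "\<forall>A. finite A \<and> A \<subseteq> VY \<longrightarrow>
      \<bar>k * real (card A) - real (card {x \<in> VX. f x \<in> A})\<bar> \<le> C1 * real (card (vboundary VY EdY A))"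
    using assms(1) unfolding quasi_k_to_one_def by blast
  obtain C2 where "C2 > 0" and q2: "\<forall>A. finite A \<and> A \<subseteq> VY \<longrightarrow>
      \<bar>k' * real (card A) - real (card {x \<in> VX. f x \<in> A})\<bar> \<le> C2 * real (card (vboundary VY EdY A))"
    using assms(2) unfolding quasi_k_to_one_def by blast
  define L where "L = \<bar>k\<bar> * (C1 + C2) + \<bar>k - k'\<bar> * C1"
  have "L \<ge> 0" unfolding L_def using \<open>C1 > 0\<close> \<open>C2 > 0\<close> by simp
  moreover
  have "\<bar>k - k'\<bar> * real (card {x \<in> VX. f x \<in> A}) \<le> L * real (card (vboundary VY EdY A))"
    if A: "finite A" "A \<subseteq> VY" for A
  proof -
    define a where "a = real (card A)"
    define p where "p = real (card {x \<in> VX. f x \<in> A})"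
    define b where "b = real (card (vboundary VY EdY A))"
    have h1: "\<bar>k * a - p\<bar> \<le> C1 * b" and h2: "\<bar>k' * a - p\<bar> \<le> C2 * b"
      using q1 q2 A unfolding a_def p_def b_def by simp_all
    have "a \<ge> 0" unfolding a_def by simp
    have diff: "\<bar>k - k'\<bar> * a \<le> (C1 + C2) * b"
    proof -
      have "\<bar>k - k'\<bar> * a = \<bar>(k * a - p) - (k' * a - p)\<bar>"
        using \<open>a \<ge> 0\<close> by (simp add: abs_mult left_diff_distrib[symmetric])
      also have "\<dots> \<le> \<bar>k * a - p\<bar> + \<bar>k' * a - p\<bar>" by (rule abs_triangle_ineq4)
      also have "\<dots> \<le> (C1 + C2) * b" using h1 h2 by (simp add: distrib_right)
      finally show ?thesis .
    qed
    have "p \<le> \<bar>k\<bar> * a + C1 * b"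
      using h1 \<open>a \<ge> 0\<close> abs_ge_self[of k] mult_right_mono[of k "\<bar>k\<bar>" a] by linarith
    then have "\<bar>k - k'\<bar> * p \<le> \<bar>k - k'\<bar> * (\<bar>k\<bar> * a + C1 * b)"
      by (intro mult_left_mono) auto
    also have "\<dots> = \<bar>k\<bar> * (\<bar>k - k'\<bar> * a) + \<bar>k - k'\<bar> * C1 * b" by (simp add: algebra_simps)
    also have "\<dots> \<le> \<bar>k\<bar> * ((C1 + C2) * b) + \<bar>k - k'\<bar> * C1 * b"
      using diff by (intro add_right_mono mult_left_mono) auto
    also have "\<dots> = L * b" unfolding L_def by (simp add: algebra_simps)
    finally show ?thesis unfolding p_def b_def .
  qed
  ultimately show ?thesis by (rule that)
qed

lemma amenable_graph_isoperimetric_nonpos: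
  fixes a L :: real
  assumes "amenable_graph V E"
    and "\<And>F. finite F \<Longrightarrow> F \<noteq> {} \<Longrightarrow> F \<subseteq> V \<Longrightarrow>
      a * real (card F) \<le> L * real (card (vboundary V E F))"
  shows "a \<le> 0"
proof -
  obtain Fs :: "nat \<Rightarrow> 'a set" where Fs: "\<forall>n. finite (Fs n) \<and> Fs n \<noteq> {} \<and> Fs n \<subseteq> V"
    and lim: "(\<lambda>n. real (card (vboundary V E (Fs n))) / real (card (Fs n))) \<longlonglongrightarrow> 0"
    using assms(1) unfolding amenable_graph_def by blast
  have "a \<le> L * (real (card (vboundary V E (Fs n))) / real (card (Fs n)))" for n
  proof -
    have F: "finite (Fs n)" "Fs n \<noteq> {}" "Fs n \<subseteq> V" using Fs by auto
    then have "real (card (Fs n)) > 0" by auto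
    then show ?thesis using assms(2)[OF F] by (simp add: times_divide_eq_right pos_le_divide_eq)
  qed
  moreover have "(\<lambda>n. L * (real (card (vboundary V E (Fs n))) / real (card (Fs n)))) \<longlonglongrightarrow> L * 0"
    by (intro tendsto_mult tendsto_const lim)
  ultimately have "a \<le> L * 0"
    by (intro LIMSEQ_le_const) auto
  then show ?thesis by simp
qed

lemma quasi_k_to_one_difference_isoperimetric:
  assumes "bounded_degree_graph VX EdX" "bounded_degree_graph VY EdY"
    and "quasi_isometry VX EdX VY EdY f"
    and "quasi_k_to_one VX EdX VY EdY f k" "quasi_k_to_one VX EdX VY EdY f k'"
  obtains L :: real where "\<And>F. finite F \<Longrightarrow> F \<subseteq> VX \<Longrightarrow>
    \<bar>k - k'\<bar> * real (card F) \<le> L * real (card (vboundary VX EdX F))"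
proof -
  obtain L where "L \<ge> 0" and L: "\<And>A. finite A \<Longrightarrow> A \<subseteq> VY \<Longrightarrow>
      \<bar>k - k'\<bar> * real (card {x \<in> VX. f x \<in> A}) \<le> L * real (card (vboundary VY EdY A))"
    using quasi_k_to_one_difference_bound[OF assms(4,5)] by metis
  obtain M where M: "\<And>F. finite F \<Longrightarrow> F \<subseteq> VX \<Longrightarrow>
      \<exists>A. finite A \<and> A \<subseteq> VY \<and> F \<subseteq> {x \<in> VX. f x \<in> A} \<and>
        card (vboundary VY EdY A) \<le> M * card (vboundary VX EdX F)"
    using quasi_isometry_thickening[OF assms(1-3)] by metis
  have "\<bar>k - k'\<bar> * real (card F) \<le> (L * M) * real (card (vboundary VX EdX F))"
    if F: "finite F" "F \<subseteq> VX" for F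
  proof -
    obtain A where A: "finite A" "A \<subseteq> VY" "F \<subseteq> {x \<in> VX. f x \<in> A}"
      "card (vboundary VY EdY A) \<le> M * card (vboundary VX EdX F)"
      using M[OF F] by blast
    have "card F \<le> card {x \<in> VX. f x \<in> A}"
      using A(3) quasi_isometry_finite_preimage[OF assms(1,3) A(1)] by (rule card_mono[rotated])
    then have "\<bar>k - k'\<bar> * real (card F) \<le> \<bar>k - k'\<bar> * real (card {x \<in> VX. f x \<in> A})"
      by (intro mult_left_mono) auto
    also have "\<dots> \<le> L * real (card (vboundary VY EdY A))" using L A(1,2) .
    also have "\<dots> \<le> L * (M * real (card (vboundary VX EdX F)))"
      using \<open>L \<ge> 0\<close> of_nat_mono[OF A(4), where 'a=real] by (intro mult_left_mono) simp_all
    finally show ?thesis by (simp add: mult.assoc)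
  qed
  then show ?thesis by (rule that)
qed

theorem lemma2p9:
  fixes VX :: "'a set" and EdX :: "'a \<Rightarrow> 'a \<Rightarrow> bool"
    and VY :: "'b set" and EdY :: "'b \<Rightarrow> 'b \<Rightarrow> bool"
    and f :: "'a \<Rightarrow> 'b" and k k' :: real
  assumes "bounded_degree_graph VX EdX" and "bounded_degree_graph VY EdY"
    and "amenable_graph VX EdX"
    and "quasi_isometry VX EdX VY EdY f"
    and "k > 0" and "k' > 0"
    and "quasi_k_to_one VX EdX VY EdY f k" and "quasi_k_to_one VX EdX VY EdY f k'"
  shows "k = k'"
proof -
  obtain L where isoperimetric: "\<And>F. finite F \<Longrightarrow> F \<subseteq> VX \<Longrightarrow>
      \<bar>k - k'\<bar> * real (card F) \<le> L * real (card (vboundary VX EdX F))"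
    using quasi_k_to_one_difference_isoperimetric[OF assms(1,2,4,7,8)] by metis
  have "\<bar>k - k'\<bar> \<le> 0"
    by (rule amenable_graph_isoperimetric_nonpos[OF assms(3), where L = L]) (simp add: isoperimetric)
  then show ?thesis by simp
qed

end
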